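(* Let $\Omega \subset \mathbb{R}^2$ be open, bounded with $|\Omega| = 1$, and let $\Omega = \bigcup_{i=1}^N \Omega_i$ be a partition into pairwise disjoint measurable sets of positive measure. Define $\eta_0 > 0$ by $\pi\eta_0^2 = \min_{1 \le i \le N}|\Omega_i|$. For each $i$ let $B_i$ be a disk with $|B_i| = |\Omega_i|$ and $|\Omega_i \triangle B_i| = |\Omega_i|\mathcal{A}(\Omega_i)$. Let $c_1 > 0$, $d_2 \ge 0$ and assume $\sum_{i=1}^N \frac{|\Omega_i|}{|\Omega|} D(\Omega_i) \le d_2$. Let $I = \{ i \in \{1,\dots,N\} : |\Omega_i| \ge (1+c_1)\pi\eta_0^2\}$. Then $$\left|\left\{x \in \Omega : \Big\| x - \bigcup_{i \in I} B_i\Big\| \le 2\eta_0\right\}\right| \le \frac{9d_2}{c_1} + 9d_2.$$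
   Context: $|\cdot|$ is Lebesgue measure and $\triangle$ is symmetric difference. For $x \in \mathbb{R}^2$ and $A \subset \mathbb{R}^2$, $\|x - A\| := \inf_{y\in A}\|x-y\|$. Fraenkel asymmetry: $\mathcal{A}(E) := \inf_B \frac{|E\triangle B|}{|E|}$ over disks $B$ with $|B| = |E|$ (the infimum is attained). $D(\Omega_i) := \frac{|\Omega_i| - \min_{1\le j\le N}|\Omega_j|}{|\Omega_i|}$. *)

theory Defs
  imports "HOL-Analysis.Analysis"
begin

definition is_disk :: "(real^2) set \<Rightarrow> bool" where
  "is_disk B \<longleftrightarrow> (\<exists>c r. r > 0 \<and> B = ball c r)"

definition fraenkel_asymmetry :: "(real^2) set \<Rightarrow> real" where
  "fraenkel_asymmetry E =
     (INF B \<in> {B. is_disk B \<and> measure lebesgue B = measure lebesgue E}.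
        measure lebesgue ((E - B) \<union> (B - E)) / measure lebesgue E)"

definition Ddef :: "nat \<Rightarrow> (nat \<Rightarrow> (real^2) set) \<Rightarrow> nat \<Rightarrow> real" where
  "Ddef N \<Omega>s i =
     (measure lebesgue (\<Omega>s i) - Min ((\<lambda>j. measure lebesgue (\<Omega>s j)) ` {1..N}))
       / measure lebesgue (\<Omega>s i)"

text \<open>The set of points of S at distance at most t from A, with the convention
  that the distance to the empty set is +infinity (so the set is empty then).\<close>
definition near_set :: "(real^2) set \<Rightarrow> (real^2) set \<Rightarrow> real \<Rightarrow> (real^2) set" where
  "near_set S A t = {x \<in> S. A \<noteq> {} \<and> infdist x A \<le> t}"

end

theory Submission
  imports Defs
begin

text \<open>Every disk \<open>B\<^sub>i\<close> with \<open>i \<in> I\<close> has radius \<open>r\<^sub>i \<ge> \<eta>\<^sub>0\<close>, so the points within \<open>2\<eta>\<^sub>0\<close> of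
  \<open>\<Union>\<^sub>i\<^sub>\<in>\<^sub>I B\<^sub>i\<close> lie in the concentric disks of radius \<open>3r\<^sub>i\<close>, of total area at most \<open>9\<Sum>\<^sub>i\<^sub>\<in>\<^sub>I |\<Omega>\<^sub>i|\<close>.
  A Markov-type count bounds \<open>\<Sum>\<^sub>i\<^sub>\<in>\<^sub>I |\<Omega>\<^sub>i|\<close> by \<open>(1+c\<^sub>1)/c\<^sub>1\<close> times the total excess
  \<open>\<Sum>\<^sub>i (|\<Omega>\<^sub>i| - \<pi>\<eta>\<^sub>0\<^sup>2)\<close>, and since \<open>|\<Omega>| = 1\<close> that excess is exactly \<open>\<Sum>\<^sub>i |\<Omega>\<^sub>i| D(\<Omega>\<^sub>i) \<le> d\<^sub>2\<close>.\<close>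

lemma measure_cball_real2: "r \<ge> 0 \<Longrightarrow> measure lebesgue (cball (c::real^2) r) = pi * r^2"
  using content_cball[of r c] by (simp add: unit_ball_vol_2)

lemma measure_ball_real2: "r \<ge> 0 \<Longrightarrow> measure lebesgue (ball (c::real^2) r) = pi * r^2"
  using content_ball[of r c] by (simp add: unit_ball_vol_2)

lemma is_disk_enlarged_measure:
  assumes "is_disk B" "pi * t^2 \<le> measure lebesgue B" "t \<ge> 0"
  obtains c r where "r > 0" "B = ball c r" "pi * (r + 2 * t)^2 \<le> 9 * measure lebesgue B"
proof -
  obtain c r where r: "r > 0" and B: "B = ball c r"
    using assms(1) unfolding is_disk_def by blast
  then have area: "measure lebesgue B = pi * r^2"
    using measure_ball_real2[of r c] by simp
  with assms(2,3) r have "t \<le> r"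
    by (simp add: power2_le_iff_abs_le)
  then have "(r + 2 * t)^2 \<le> (3 * r)^2"
    using assms(3) by (intro power_mono) auto
  with area have "pi * (r + 2 * t)^2 \<le> 9 * measure lebesgue B"
    by (simp add: power_mult_distrib)
  with r B show thesis by (rule that)
qed

lemma infdist_ball_ge:
  fixes x c :: "'a::metric_space"
  assumes "r > 0"
  shows "dist x c - r \<le> infdist x (ball c r)"
proof -
  have "dist x c - r \<le> dist x a" if "a \<in> ball c r" for a
    using that dist_triangle[of x c a] by (simp add: dist_commute)
  with assms show ?thesis
    by (simp add: infdist_notempty) (rule cINF_greatest, auto)
qed

lemma infdist_UN_finite:
  assumes "finite I" "I \<noteq> {}" "\<And>i. i \<in> I \<Longrightarrow> A i \<noteq> {}"
  shows "infdist x (\<Union>i\<in>I. A i) = (MIN i\<in>I. infdist x (A i))"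
  using assms
proof (induction I rule: finite_ne_induct)
  case (insert j I)
  then have "(\<Union>i\<in>I. A i) \<noteq> {}" by auto
  with insert show ?case by (simp add: infdist_Un_min)
qed simp

lemma near_set_UN_balls_subset:
  fixes c :: "'i \<Rightarrow> real^2"
  assumes "finite I" "\<And>i. i \<in> I \<Longrightarrow> r i > 0"
  shows "near_set S (\<Union>i\<in>I. ball (c i) (r i)) t \<subseteq> (\<Union>i\<in>I. cball (c i) (r i + t))"
proof
  fix x assume "x \<in> near_set S (\<Union>i\<in>I. ball (c i) (r i)) t"
  then have "I \<noteq> {}" and near: "infdist x (\<Union>i\<in>I. ball (c i) (r i)) \<le> t"
    unfolding near_set_def by auto
  obtain i where i: "i \<in> I"
    and "infdist x (ball (c i) (r i)) = (MIN j\<in>I. infdist x (ball (c j) (r j)))"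
  proof -
    have "(MIN j\<in>I. infdist x (ball (c j) (r j))) \<in> (\<lambda>j. infdist x (ball (c j) (r j))) ` I"
      using \<open>finite I\<close> \<open>I \<noteq> {}\<close> by (intro Min_in) auto
    with that show thesis by auto
  qed
  moreover have "infdist x (\<Union>i\<in>I. ball (c i) (r i)) = (MIN j\<in>I. infdist x (ball (c j) (r j)))"
    using assms \<open>I \<noteq> {}\<close> by (intro infdist_UN_finite) fastforce+
  ultimately have "infdist x (ball (c i) (r i)) \<le> t"
    using near by simp
  then have "dist (c i) x \<le> r i + t"
    using infdist_ball_ge[OF assms(2)[OF i], of x "c i"] by (simp add: dist_commute)
  with i show "x \<in> (\<Union>i\<in>I. cball (c i) (r i + t))" by auto
qed

lemma measure_near_set_UN_balls_le:
  fixes c :: "'i \<Rightarrow> real^2"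
  assumes "finite I" "\<And>i. i \<in> I \<Longrightarrow> r i > 0" "t \<ge> 0"
  shows "measure lebesgue (near_set S (\<Union>i\<in>I. ball (c i) (r i)) t) \<le> (\<Sum>i\<in>I. pi * (r i + t)^2)"
proof -
  let ?E = "near_set S (\<Union>i\<in>I. ball (c i) (r i)) t"
  have cover: "(\<Union>i\<in>I. cball (c i) (r i + t)) \<in> lmeasurable"
    using assms(1) by (intro lmeasurable_compact compact_UN) auto
  have "measure lebesgue ?E \<le> measure lebesgue (\<Union>i\<in>I. cball (c i) (r i + t))"
  proof (cases "?E \<in> sets lebesgue")
    case True
    then show ?thesis
      using measure_mono_fmeasurable[OF near_set_UN_balls_subset[OF assms(1,2)] True cover] by simp
  qed (simp add: measure_notin_sets)
  also have "\<dots> \<le> (\<Sum>i\<in>I. measure lebesgue (cball (c i) (r i + t)))"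
    using assms(1) by (intro measure_UNION_le) auto
  also have "\<dots> = (\<Sum>i\<in>I. pi * (r i + t)^2)"
    using assms(2,3) by (intro sum.cong refl measure_cball_real2) (auto simp: less_imp_le)
  finally show ?thesis .
qed

text \<open>Only indices exceeding the minimum \<open>m\<close> by the factor \<open>1 + c\<close> are counted, and for each
  of them \<open>\<mu>\<^sub>i \<le> (1+c)/c \<cdot> (\<mu>\<^sub>i - m)\<close>.\<close>
lemma sum_large_le_excess:
  fixes \<mu> :: "'i \<Rightarrow> real"
  assumes "finite A" "c > 0" "\<And>i. i \<in> A \<Longrightarrow> m \<le> \<mu> i"
  shows "(\<Sum>i\<in>{i\<in>A. (1 + c) * m \<le> \<mu> i}. \<mu> i) \<le> (1 + c) / c * (\<Sum>i\<in>A. \<mu> i - m)"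
proof -
  have "(\<Sum>i\<in>{i\<in>A. (1 + c) * m \<le> \<mu> i}. \<mu> i) \<le> (\<Sum>i\<in>{i\<in>A. (1 + c) * m \<le> \<mu> i}. (1 + c) / c * (\<mu> i - m))"
  proof (rule sum_mono)
    fix i assume "i \<in> {i\<in>A. (1 + c) * m \<le> \<mu> i}"
    then have "c * \<mu> i \<le> (1 + c) * (\<mu> i - m)" by (simp add: algebra_simps)
    with assms(2) show "\<mu> i \<le> (1 + c) / c * (\<mu> i - m)" by (simp add: field_simps)
  qed
  also have "\<dots> \<le> (\<Sum>i\<in>A. (1 + c) / c * (\<mu> i - m))"
    using assms by (intro sum_mono2) (auto intro: mult_nonneg_nonneg)
  finally show ?thesis by (simp add: sum_distrib_left)
qed

lemma measure_mult_Ddef: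
  assumes "measure lebesgue (\<Omega>s i) > 0"
  shows "measure lebesgue (\<Omega>s i) * Ddef N \<Omega>s i
           = measure lebesgue (\<Omega>s i) - Min ((\<lambda>j. measure lebesgue (\<Omega>s j)) ` {1..N})"
  using assms unfolding Ddef_def by simp

theorem mainTheorem4:
  fixes \<Omega> :: "(real^2) set" and \<Omega>s B :: "nat \<Rightarrow> (real^2) set"
    and N :: nat and \<eta>0 c1 d2 :: real
  assumes "open \<Omega>" and "bounded \<Omega>" and "measure lebesgue \<Omega> = 1"
    and "N \<ge> 1"
    and "\<Omega> = (\<Union>i\<in>{1..N}. \<Omega>s i)"
    and "\<And>i. i \<in> {1..N} \<Longrightarrow> \<Omega>s i \<in> sets lebesgue"
    and "\<And>i. i \<in> {1..N} \<Longrightarrow> measure lebesgue (\<Omega>s i) > 0"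
    and "\<And>i j. i \<in> {1..N} \<Longrightarrow> j \<in> {1..N} \<Longrightarrow> i \<noteq> j \<Longrightarrow> \<Omega>s i \<inter> \<Omega>s j = {}"
    and "\<eta>0 > 0"
    and "pi * \<eta>0 ^ 2 = Min ((\<lambda>i. measure lebesgue (\<Omega>s i)) ` {1..N})"
    and "\<And>i. i \<in> {1..N} \<Longrightarrow> is_disk (B i)"
    and "\<And>i. i \<in> {1..N} \<Longrightarrow> measure lebesgue (B i) = measure lebesgue (\<Omega>s i)"
    and "\<And>i. i \<in> {1..N} \<Longrightarrow>
           measure lebesgue ((\<Omega>s i - B i) \<union> (B i - \<Omega>s i))
             = measure lebesgue (\<Omega>s i) * fraenkel_asymmetry (\<Omega>s i)"
    and "c1 > 0" and "d2 \<ge> 0"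
    and "(\<Sum>i=1..N. measure lebesgue (\<Omega>s i) / measure lebesgue \<Omega> * Ddef N \<Omega>s i) \<le> d2"
  shows "measure lebesgue
           (near_set \<Omega> (\<Union>i\<in>{i \<in> {1..N}. measure lebesgue (\<Omega>s i) \<ge> (1 + c1) * pi * \<eta>0 ^ 2}. B i) (2 * \<eta>0))
         \<le> 9 * d2 / c1 + 9 * d2"
proof -
  define \<mu> where "\<mu> i = measure lebesgue (\<Omega>s i)" for i
  define I where "I = {i \<in> {1..N}. (1 + c1) * (pi * \<eta>0 ^ 2) \<le> \<mu> i}"
  have min_le: "pi * \<eta>0 ^ 2 \<le> \<mu> i" if "i \<in> {1..N}" for i
    unfolding assms(10) \<mu>_def using that by simp
  obtain c r where disk: "\<And>i. i \<in> {1..N} \<Longrightarrow> r i > 0 \<and> B i = ball (c i) (r i)"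
    and enlarged_area: "\<And>i. i \<in> {1..N} \<Longrightarrow> pi * (r i + 2 * \<eta>0)^2 \<le> 9 * \<mu> i"
  proof -
    have "\<exists>c r. r > 0 \<and> B i = ball c r \<and> pi * (r + 2 * \<eta>0)^2 \<le> 9 * \<mu> i" if "i \<in> {1..N}" for i
      using is_disk_enlarged_measure[of "B i" \<eta>0] assms(9,11,12) min_le that
      unfolding \<mu>_def by (metis less_imp_le)
    then show thesis using that by metis
  qed
  have "(\<Union>i\<in>I. B i) = (\<Union>i\<in>I. ball (c i) (r i))" "\<forall>i\<in>I. r i > 0"
    using disk unfolding I_def by auto
  then have "measure lebesgue (near_set \<Omega> (\<Union>i\<in>I. B i) (2 * \<eta>0))
      \<le> (\<Sum>i\<in>I. pi * (r i + 2 * \<eta>0)^2)"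
    using measure_near_set_UN_balls_le[of I r "2 * \<eta>0" \<Omega> c] assms(9) unfolding I_def by simp
  also have "\<dots> \<le> 9 * (\<Sum>i\<in>I. \<mu> i)"
    unfolding sum_distrib_left by (intro sum_mono enlarged_area) (simp add: I_def)
  also have "\<dots> \<le> 9 * ((1 + c1) / c1 * (\<Sum>i=1..N. \<mu> i - pi * \<eta>0 ^ 2))"
    using sum_large_le_excess[of "{1..N}" c1 "pi * \<eta>0 ^ 2" \<mu>] assms(14) min_le
    unfolding I_def by (simp add: mult_left_mono)
  also have "(\<Sum>i=1..N. \<mu> i - pi * \<eta>0 ^ 2)
      = (\<Sum>i=1..N. measure lebesgue (\<Omega>s i) / measure lebesgue \<Omega> * Ddef N \<Omega>s i)"
    using assms(3,7) measure_mult_Ddef unfolding assms(10) \<mu>_def by (intro sum.cong) auto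
  also have "9 * ((1 + c1) / c1 * \<dots>) \<le> 9 * ((1 + c1) / c1 * d2)"
    using assms(14,16) by (intro mult_left_mono) auto
  also have "\<dots> = 9 * d2 / c1 + 9 * d2"
    using assms(14) by (simp add: field_simps)
  finally show ?thesis
    unfolding I_def \<mu>_def by (simp add: mult.assoc)
qed

end
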